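(* For each natural number $n\ge 1$, $\mathrm{Log}_{<1}(\mathbb{R}^{n+1})\subsetneq \mathrm{Log}_{<1}(\mathbb{R}^n)$; that is, $\mathrm{Log}_{<1}(\mathbb{R}^n)$ strictly contains $\mathrm{Log}_{<1}(\mathbb{R}^{n+1})$.
   Context: Modal formulas are built from a countable set of propositional variables using $\bot$, $\to$ and one unary modality $\lozenge$. A frame is a pair $(X,R)$; a valuation assigns subsets of $X$ to variables; $x\models\lozenge\varphi$ iff there is $y$ with $xRy$ and $y\models\varphi$. A formula is valid in a frame if true at every point under every valuation. For a metric space $(X,d)$, $\mathrm{Log}_{<1}(X)$ is the set of modal formulas valid in the frame $(X,R_{<1})$, where $xR_{<1}y$ iff $d(x,y)<1$. $\mathbb{R}^n$ carries the Euclidean metric. *)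

theory Defs
  imports "HOL-Analysis.Analysis"
begin

datatype fm = Var nat | Bot | Imp fm fm | Dia fm

fun sat :: "'a set \<Rightarrow> ('a \<Rightarrow> 'a \<Rightarrow> bool) \<Rightarrow> (nat \<Rightarrow> 'a set) \<Rightarrow> 'a \<Rightarrow> fm \<Rightarrow> bool" where
  "sat X R V x (Var p) = (x \<in> V p)"
| "sat X R V x Bot = False"
| "sat X R V x (Imp a b) = (sat X R V x a \<longrightarrow> sat X R V x b)"
| "sat X R V x (Dia a) = (\<exists>y\<in>X. R x y \<and> sat X R V y a)"

definition valid_in :: "'a set \<Rightarrow> ('a \<Rightarrow> 'a \<Rightarrow> bool) \<Rightarrow> fm \<Rightarrow> bool" where
  "valid_in X R \<phi> \<longleftrightarrow> (\<forall>V. (\<forall>p. V p \<subseteq> X) \<longrightarrow> (\<forall>x\<in>X. sat X R V x \<phi>))"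

definition Log_lt1 :: "'a set \<Rightarrow> ('a \<Rightarrow> 'a \<Rightarrow> real) \<Rightarrow> fm set" where
  "Log_lt1 X d = {\<phi>. valid_in X (\<lambda>x y. d x y < 1) \<phi>}"

definition Rn :: "nat \<Rightarrow> (nat \<Rightarrow> real) set" where
  "Rn n = {x. \<forall>i\<ge>n. x i = 0}"

definition eucl_dist :: "nat \<Rightarrow> (nat \<Rightarrow> real) \<Rightarrow> (nat \<Rightarrow> real) \<Rightarrow> real" where
  "eucl_dist n x y = sqrt (\<Sum>i<n. (x i - y i)\<^sup>2)"

end

theory Submission
  imports Defs "HOL-Library.Function_Algebras"
begin

text \<open>
  Dropping the last coordinate is a surjective p-morphism from \<open>(\<real>\<^sup>n\<^sup>+\<^sup>1, d < 1)\<close> onto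
  \<open>(\<real>\<^sup>n, d < 1)\<close>, so every formula valid in \<open>\<real>\<^sup>n\<^sup>+\<^sup>1\<close> is valid in \<open>\<real>\<^sup>n\<close>.

  For strictness: \<open>k\<close> diamonds reach exactly the open ball of radius \<open>k\<close>, so a formula
  with \<open>n + 2\<close> variables expresses that no open \<open>k\<close>-ball contains \<open>n + 2\<close> points at mutual
  distance at least \<open>m\<close>. If \<open>m \<ge> \<surd>2 k\<close>, the vectors from the centre to such points are
  pairwise obtuse, and \<open>\<real>\<^sup>n\<close> contains at most \<open>n + 1\<close> pairwise obtuse vectors. In
  \<open>\<real>\<^sup>n\<^sup>+\<^sup>1\<close>, however, there is a simplex inscribed in a sphere whose edges are all longer
  than \<open>\<surd>2\<close> times the radius; choosing integers with \<open>\<surd>2 \<le> m / k\<close> below that ratio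
  gives the forbidden configuration.
\<close>

section \<open>P-morphisms\<close>

lemma sat_pmorphism:
  fixes f :: "'a \<Rightarrow> 'b"
  assumes maps: "f ` X \<subseteq> Y"
    and forth: "\<And>x y. x \<in> X \<Longrightarrow> y \<in> X \<Longrightarrow> R x y \<Longrightarrow> S (f x) (f y)"
    and lift: "\<And>x z. x \<in> X \<Longrightarrow> z \<in> Y \<Longrightarrow> S (f x) z \<Longrightarrow> \<exists>y\<in>X. R x y \<and> f y = z"
    and "x \<in> X"
  shows "sat X R (\<lambda>p. {x \<in> X. f x \<in> V p}) x \<phi> \<longleftrightarrow> sat Y S V (f x) \<phi>"
  using \<open>x \<in> X\<close>
proof (induction \<phi> arbitrary: x)
  case (Dia \<phi>)
  show ?case
  proof
    assume "sat X R (\<lambda>p. {x \<in> X. f x \<in> V p}) x (Dia \<phi>)"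
    then show "sat Y S V (f x) (Dia \<phi>)"
      using Dia maps forth by fastforce
  next
    assume "sat Y S V (f x) (Dia \<phi>)"
    then obtain z where "z \<in> Y" "S (f x) z" "sat Y S V z \<phi>"
      by auto
    then show "sat X R (\<lambda>p. {x \<in> X. f x \<in> V p}) x (Dia \<phi>)"
      using Dia lift by fastforce
  qed
qed auto

lemma valid_in_pmorphic_image:
  fixes f :: "'a \<Rightarrow> 'b"
  assumes onto: "f ` X = Y"
    and forth: "\<And>x y. x \<in> X \<Longrightarrow> y \<in> X \<Longrightarrow> R x y \<Longrightarrow> S (f x) (f y)"
    and lift: "\<And>x z. x \<in> X \<Longrightarrow> z \<in> Y \<Longrightarrow> S (f x) z \<Longrightarrow> \<exists>y\<in>X. R x y \<and> f y = z"
    and valid: "valid_in X R \<phi>"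
  shows "valid_in Y S \<phi>"
  unfolding valid_in_def
proof (intro allI impI ballI)
  fix V :: "nat \<Rightarrow> 'b set" and y
  assume "\<forall>p. V p \<subseteq> Y" and "y \<in> Y"
  then obtain x where "x \<in> X" "y = f x"
    using onto by auto
  moreover have "sat X R (\<lambda>p. {x \<in> X. f x \<in> V p}) x \<phi>"
    using valid \<open>x \<in> X\<close> unfolding valid_in_def by auto
  moreover have "f ` X \<subseteq> Y"
    using onto by simp
  ultimately show "sat Y S V y \<phi>"
    using sat_pmorphism[of f X Y R S, OF _ forth lift] by blast
qed

section \<open>Euclidean distance and coordinate projection\<close>

lemma eucl_dist_nonneg: "0 \<le> eucl_dist N x y"
  by (simp add: eucl_dist_def sum_nonneg)

lemma eucl_dist_commute: "eucl_dist N x y = eucl_dist N y x"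
  by (simp add: eucl_dist_def power2_commute)

lemma eucl_dist_triangle: "eucl_dist N x z \<le> eucl_dist N x y + eucl_dist N y z"
proof -
  have L2: "eucl_dist N u v = L2_set (\<lambda>i. u i - v i) {..<N}" for u v
    by (simp add: eucl_dist_def L2_set_def)
  have "L2_set (\<lambda>i. (x i - y i) + (y i - z i)) {..<N}
      \<le> L2_set (\<lambda>i. x i - y i) {..<N} + L2_set (\<lambda>i. y i - z i) {..<N}"
    by (rule L2_set_triangle_ineq)
  then show ?thesis
    by (simp add: L2)
qed

lemma eucl_dist_mult:
  assumes "\<And>i. u i - v i = c * (x i - y i)"
  shows "eucl_dist N u v = \<bar>c\<bar> * eucl_dist N x y"
proof -
  have "(\<Sum>i<N. (u i - v i)\<^sup>2) = c\<^sup>2 * (\<Sum>i<N. (x i - y i)\<^sup>2)"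
    by (simp add: assms power_mult_distrib sum_distrib_left)
  then show ?thesis
    by (simp add: eucl_dist_def real_sqrt_mult)
qed

lemma eucl_dist_Suc_ge: "eucl_dist N x y \<le> eucl_dist (Suc N) x y"
  by (simp add: eucl_dist_def)

lemma eucl_dist_sq: "(eucl_dist N x y)\<^sup>2 = (\<Sum>t<N. (x t - y t)\<^sup>2)"
  by (simp add: eucl_dist_def sum_nonneg)

definition coord_proj :: "nat \<Rightarrow> (nat \<Rightarrow> real) \<Rightarrow> nat \<Rightarrow> real" where
  "coord_proj n x = (\<lambda>i. if i < n then x i else 0)"

lemma eucl_dist_coord_proj_left [simp]: "eucl_dist n (coord_proj n x) y = eucl_dist n x y"
  by (simp add: eucl_dist_def coord_proj_def)

lemma eucl_dist_coord_proj_right [simp]: "eucl_dist n x (coord_proj n y) = eucl_dist n x y"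
  by (simp add: eucl_dist_def coord_proj_def)

lemma coord_proj_image: "coord_proj n ` Rn (Suc n) = Rn n"
proof
  show "coord_proj n ` Rn (Suc n) \<subseteq> Rn n"
    by (auto simp: coord_proj_def Rn_def)
  have "coord_proj n z = z" if "z \<in> Rn n" for z
    using that by (auto simp: coord_proj_def Rn_def)
  moreover have "Rn n \<subseteq> Rn (Suc n)"
    by (auto simp: Rn_def)
  ultimately show "Rn n \<subseteq> coord_proj n ` Rn (Suc n)"
    by (metis image_eqI subsetD subsetI)
qed

lemma Log_lt1_Rn_Suc_subset:
  "Log_lt1 (Rn (Suc n)) (eucl_dist (Suc n)) \<subseteq> Log_lt1 (Rn n) (eucl_dist n)"
proof -
  have lift: "\<exists>y\<in>Rn (Suc n). eucl_dist (Suc n) x y < 1 \<and> coord_proj n y = z"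
    if "z \<in> Rn n" "eucl_dist n (coord_proj n x) z < 1" for x z
  proof (intro bexI conjI)
    let ?y = "z(n := x n)"
    show "?y \<in> Rn (Suc n)" "coord_proj n ?y = z"
      using \<open>z \<in> Rn n\<close> by (auto simp: Rn_def coord_proj_def)
    have "eucl_dist (Suc n) x ?y = eucl_dist n x z"
      by (simp add: eucl_dist_def)
    then show "eucl_dist (Suc n) x ?y < 1"
      using that(2) by simp
  qed
  have forth: "eucl_dist n (coord_proj n x) (coord_proj n y) < 1"
    if "eucl_dist (Suc n) x y < 1" for x y
    using eucl_dist_Suc_ge[of n x y] that by simp
  show ?thesis
    unfolding Log_lt1_def
    using valid_in_pmorphic_image[OF coord_proj_image,
        where R = "\<lambda>x y. eucl_dist (Suc n) x y < 1" and S = "\<lambda>x y. eucl_dist n x y < 1"] forth lift by blast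
qed

section \<open>Iterated diamonds in Euclidean space\<close>

abbreviation sat_Rn :: "nat \<Rightarrow> (nat \<Rightarrow> (nat \<Rightarrow> real) set) \<Rightarrow> (nat \<Rightarrow> real) \<Rightarrow> fm \<Rightarrow> bool" where
  "sat_Rn N \<equiv> sat (Rn N) (\<lambda>x y. eucl_dist N x y < 1)"

lemma Rn_segment_point:
  assumes "x \<in> Rn N" "y \<in> Rn N" "0 \<le> t"
  shows "\<exists>z\<in>Rn N. eucl_dist N x z = t * eucl_dist N x y \<and> eucl_dist N z y = \<bar>1 - t\<bar> * eucl_dist N x y"
proof (intro bexI conjI)
  let ?z = "\<lambda>i. x i + t * (y i - x i)"
  show "?z \<in> Rn N"
    using assms by (simp add: Rn_def)
  show "eucl_dist N x ?z = t * eucl_dist N x y"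
    using eucl_dist_mult[of x ?z t x y N] \<open>0 \<le> t\<close> by (simp add: algebra_simps)
  show "eucl_dist N ?z y = \<bar>1 - t\<bar> * eucl_dist N x y"
    by (rule eucl_dist_mult) (simp add: algebra_simps)
qed

fun dia_iter :: "nat \<Rightarrow> fm \<Rightarrow> fm" where
  "dia_iter 0 \<phi> = \<phi>"
| "dia_iter (Suc k) \<phi> = Dia (dia_iter k \<phi>)"

lemma sat_Rn_dia_iter:
  assumes "1 \<le> k" "x \<in> Rn N"
  shows "sat_Rn N V x (dia_iter k \<phi>) \<longleftrightarrow> (\<exists>y\<in>Rn N. eucl_dist N x y < k \<and> sat_Rn N V y \<phi>)"
  using assms
proof (induction k arbitrary: x rule: nat_induct_at_least)
  case base
  then show ?case by simp
next
  case (Suc k)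
  show ?case
  proof
    assume "sat_Rn N V x (dia_iter (Suc k) \<phi>)"
    then obtain z where "z \<in> Rn N" "eucl_dist N x z < 1" "sat_Rn N V z (dia_iter k \<phi>)"
      by auto
    then obtain y where "y \<in> Rn N" "eucl_dist N z y < k" "sat_Rn N V y \<phi>"
      using Suc.IH by blast
    moreover have "eucl_dist N x y < Suc k"
      using eucl_dist_triangle[of N x y z] \<open>eucl_dist N x z < 1\<close> \<open>eucl_dist N z y < k\<close> by simp
    ultimately show "\<exists>y\<in>Rn N. eucl_dist N x y < Suc k \<and> sat_Rn N V y \<phi>"
      by blast
  next
    assume "\<exists>y\<in>Rn N. eucl_dist N x y < Suc k \<and> sat_Rn N V y \<phi>"
    then obtain y where y: "y \<in> Rn N" "eucl_dist N x y < Suc k" "sat_Rn N V y \<phi>"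
      by blast
    define t :: real where "t = 1 / Suc k"
    obtain z where z: "z \<in> Rn N" "eucl_dist N x z = t * eucl_dist N x y"
      "eucl_dist N z y = \<bar>1 - t\<bar> * eucl_dist N x y"
      using Rn_segment_point[OF \<open>x \<in> Rn N\<close> \<open>y \<in> Rn N\<close>, of t] by (auto simp: t_def)
    have "t * eucl_dist N x y < 1"
      using y(2) by (simp add: t_def field_simps)
    have "\<bar>1 - t\<bar> * eucl_dist N x y < k"
    proof -
      have "\<bar>1 - t\<bar> = k / Suc k"
        by (simp add: t_def field_simps)
      moreover have "k / Suc k * eucl_dist N x y < k / Suc k * Suc k"
        using y(2) \<open>1 \<le> k\<close> by (intro mult_strict_left_mono) auto
      ultimately show ?thesis
        by simp
    qed
    then have "sat_Rn N V z (dia_iter k \<phi>)"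
      using Suc.IH[OF z(1)] y z by auto
    then show "sat_Rn N V x (dia_iter (Suc k) \<phi>)"
      using z \<open>t * eucl_dist N x y < 1\<close> by (auto intro!: bexI[of _ z])
  qed
qed

section \<open>Formulas forbidding packings\<close>

definition Neg :: "fm \<Rightarrow> fm" where
  "Neg \<phi> = Imp \<phi> Bot"

definition Conj :: "fm \<Rightarrow> fm \<Rightarrow> fm" where
  "Conj \<phi> \<psi> = Neg (Imp \<phi> (Neg \<psi>))"

definition Conjs :: "fm list \<Rightarrow> fm" where
  "Conjs \<phi>s = foldr Conj \<phi>s (Neg Bot)"

lemma sat_Neg [simp]: "sat X R V x (Neg \<phi>) \<longleftrightarrow> \<not> sat X R V x \<phi>"
  by (simp add: Neg_def)

lemma sat_Conj [simp]: "sat X R V x (Conj \<phi> \<psi>) \<longleftrightarrow> sat X R V x \<phi> \<and> sat X R V x \<psi>"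
  by (simp add: Conj_def)

lemma sat_Conjs [simp]: "sat X R V x (Conjs \<phi>s) \<longleftrightarrow> (\<forall>\<phi>\<in>set \<phi>s. sat X R V x \<phi>)"
  by (induction \<phi>s) (simp_all add: Conjs_def)

definition no_packing_fm :: "nat \<Rightarrow> nat \<Rightarrow> nat \<Rightarrow> fm" where
  "no_packing_fm M k m = Neg (Conjs (map (\<lambda>i. dia_iter k (Conj (Var i)
      (Conjs (map (\<lambda>j. Neg (dia_iter m (Var j))) (filter (\<lambda>j. j \<noteq> i) [0..<M]))))) [0..<M]))"

definition packing :: "nat \<Rightarrow> nat \<Rightarrow> (nat \<Rightarrow> real) \<Rightarrow> real \<Rightarrow> real \<Rightarrow> (nat \<Rightarrow> nat \<Rightarrow> real) \<Rightarrow> bool" where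
  "packing N M x r s Y \<longleftrightarrow> (\<forall>i<M. Y i \<in> Rn N \<and> eucl_dist N x (Y i) < r) \<and>
     (\<forall>i<M. \<forall>j<M. i \<noteq> j \<longrightarrow> s \<le> eucl_dist N (Y i) (Y j))"

lemma sat_Rn_no_packing_fm:
  assumes "1 \<le> k" "1 \<le> m" "x \<in> Rn N"
  shows "sat_Rn N V x (no_packing_fm M k m) \<longleftrightarrow>
    \<not> (\<forall>i<M. \<exists>y\<in>Rn N. eucl_dist N x y < k \<and> y \<in> V i \<and>
        (\<forall>j<M. j \<noteq> i \<longrightarrow> \<not> (\<exists>w\<in>Rn N. eucl_dist N y w < m \<and> w \<in> V j)))"
  using assms by (simp add: no_packing_fm_def sat_Rn_dia_iter atLeast0LessThan Bex_def)

lemma packing_refutes_no_packing_fm: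
  assumes "1 \<le> k" "1 \<le> m" "x \<in> Rn N" and packing: "packing N M x k m Y"
  shows "\<not> valid_in (Rn N) (\<lambda>x y. eucl_dist N x y < 1) (no_packing_fm M k m)"
proof
  assume valid: "valid_in (Rn N) (\<lambda>x y. eucl_dist N x y < 1) (no_packing_fm M k m)"
  define V where "V p = (if p < M then {Y p} else {})" for p
  have "\<forall>p. V p \<subseteq> Rn N"
    using packing by (auto simp: V_def packing_def)
  then have "sat_Rn N V x (no_packing_fm M k m)"
    using valid \<open>x \<in> Rn N\<close> by (auto simp: valid_in_def)
  then obtain i where "i < M" and no_witness: "\<not> (\<exists>y\<in>Rn N. eucl_dist N x y < k \<and> y \<in> V i \<and>
      (\<forall>j<M. j \<noteq> i \<longrightarrow> \<not> (\<exists>w\<in>Rn N. eucl_dist N y w < m \<and> w \<in> V j)))"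
    using sat_Rn_no_packing_fm[OF assms(1-3)] by blast
  have "\<not> (\<exists>w\<in>Rn N. eucl_dist N (Y i) w < m \<and> w \<in> V j)" if "j < M" "j \<noteq> i" for j
    using packing \<open>i < M\<close> that by (force simp: V_def packing_def)
  then show False
    using no_witness packing \<open>i < M\<close> by (auto simp: V_def packing_def)
qed

lemma valid_no_packing_fm:
  assumes "1 \<le> k" "1 \<le> m" and no_packing: "\<And>x Y. x \<in> Rn N \<Longrightarrow> \<not> packing N M x k m Y"
  shows "valid_in (Rn N) (\<lambda>x y. eucl_dist N x y < 1) (no_packing_fm M k m)"
  unfolding valid_in_def
proof (intro allI impI ballI)
  fix V :: "nat \<Rightarrow> (nat \<Rightarrow> real) set" and x
  assume "x \<in> Rn N"
  show "sat_Rn N V x (no_packing_fm M k m)"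
  proof (rule ccontr)
    assume "\<not> sat_Rn N V x (no_packing_fm M k m)"
    then obtain Y where Y: "\<forall>i<M. Y i \<in> Rn N \<and> eucl_dist N x (Y i) < k \<and> Y i \<in> V i \<and>
        (\<forall>j<M. j \<noteq> i \<longrightarrow> \<not> (\<exists>w\<in>Rn N. eucl_dist N (Y i) w < m \<and> w \<in> V j))"
      unfolding sat_Rn_no_packing_fm[OF assms(1,2) \<open>x \<in> Rn N\<close>] by metis
    have "packing N M x k m Y"
      unfolding packing_def
    proof (intro conjI allI impI)
      fix i j
      assume "i < M" "j < M" "i \<noteq> j"
      then have "\<not> eucl_dist N (Y i) (Y j) < m"
        using Y by blast
      then show "m \<le> eucl_dist N (Y i) (Y j)"
        by simp
    qed (use Y in auto)
    then show False
      using no_packing \<open>x \<in> Rn N\<close> by blast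
  qed
qed

section \<open>Pairwise obtuse vectors\<close>

definition inner_Rn :: "nat \<Rightarrow> (nat \<Rightarrow> real) \<Rightarrow> (nat \<Rightarrow> real) \<Rightarrow> real" where
  "inner_Rn n x y = (\<Sum>i<n. x i * y i)"

lemma inner_Rn_commute: "inner_Rn n x y = inner_Rn n y x"
  by (simp add: inner_Rn_def mult.commute)

lemma inner_Rn_sum_left:
  "inner_Rn n (\<lambda>i. \<Sum>p\<in>P. a p * p i) y = (\<Sum>p\<in>P. a p * inner_Rn n p y)"
  unfolding inner_Rn_def by (simp add: sum_distrib_left sum_distrib_right mult.assoc sum.swap[of _ P])

lemma inner_Rn_sum_right:
  "inner_Rn n x (\<lambda>i. \<Sum>q\<in>Q. b q * q i) = (\<Sum>q\<in>Q. b q * inner_Rn n x q)"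
  by (simp only: inner_Rn_commute[of n x] inner_Rn_sum_left)

lemma inner_Rn_self_nonneg: "0 \<le> inner_Rn n x x"
  by (simp add: inner_Rn_def sum_nonneg)

lemma inner_Rn_self_eq_0_iff: "inner_Rn n x x = 0 \<longleftrightarrow> (\<forall>i<n. x i = 0)"
  by (auto simp: inner_Rn_def sum_nonneg_eq_0_iff)

lemma eucl_dist_sq_eq_inner_Rn:
  "(eucl_dist n x y)\<^sup>2 = inner_Rn n x x + inner_Rn n y y - 2 * inner_Rn n x y"
proof -
  have "(eucl_dist n x y)\<^sup>2 = (\<Sum>i<n. (x i - y i)\<^sup>2)"
    by (rule eucl_dist_sq)
  also have "\<dots> = (\<Sum>i<n. x i * x i + y i * y i - 2 * (x i * y i))"
    by (intro sum.cong) (auto simp: power2_eq_square algebra_simps)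
  finally show ?thesis
    by (simp add: inner_Rn_def sum.distrib sum_subtractf sum_distrib_left)
qed

lemma eucl_dist_diff_right: "eucl_dist n (x - z) (y - z) = eucl_dist n x y"
  by (simp add: eucl_dist_def)

lemma eucl_dist_zero_left: "(eucl_dist n 0 x)\<^sup>2 = inner_Rn n x x"
  by (simp add: eucl_dist_sq_eq_inner_Rn inner_Rn_def)

interpretation seq_space: vector_space "\<lambda>c (x :: nat \<Rightarrow> real) i. c * x i"
  by unfold_locales (auto simp: fun_eq_iff algebra_simps)

lemma sum_fun_apply: "(\<Sum>x\<in>A. f x) i = (\<Sum>x\<in>A. f x i)"
  by (induction A rule: infinite_finite_induct) auto

lemma Rn_dependent:
  assumes "finite S" "S \<subseteq> Rn n" "n < card S"
  shows "\<exists>u. (\<exists>v\<in>S. u v \<noteq> 0) \<and> (\<forall>i. (\<Sum>v\<in>S. u v * v i) = 0)"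
proof -
  define e where "e j = (\<lambda>i. if i = j then 1 else 0 :: real)" for j :: nat
  have "Rn n \<subseteq> seq_space.span (e ` {..<n})"
  proof
    fix x
    assume "x \<in> Rn n"
    then have "x = (\<Sum>j<n. (\<lambda>i. x j * e j i))"
      by (auto simp: fun_eq_iff sum_fun_apply e_def Rn_def if_distrib cong: if_cong)
    also have "\<dots> \<in> seq_space.span (e ` {..<n})"
      by (intro seq_space.span_sum seq_space.span_scale seq_space.span_base) auto
    finally show "x \<in> seq_space.span (e ` {..<n})" .
  qed
  moreover have "card (e ` {..<n}) \<le> n"
    using card_image_le[of "{..<n}" e] by simp
  ultimately have "seq_space.dependent S"
    using seq_space.independent_span_bound[of "e ` {..<n}" S] assms by fastforce
  then show ?thesis
    using seq_space.dependent_finite[OF \<open>finite S\<close>] by (auto simp: fun_eq_iff sum_fun_apply)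
qed

lemma Rn_dependent_split:
  assumes "finite S" "S \<subseteq> Rn n" "n < card S"
  obtains P Q a where "P \<subseteq> S" "Q \<subseteq> S" "P \<inter> Q = {}" "P \<noteq> {}"
    "\<And>v. v \<in> P \<union> Q \<Longrightarrow> 0 < a v" "\<And>i. (\<Sum>p\<in>P. a p * p i) = (\<Sum>q\<in>Q. a q * q i)"
proof -
  obtain u v0 where "v0 \<in> S" "u v0 \<noteq> 0" and dep: "\<And>i. (\<Sum>v\<in>S. u v * v i) = 0"
    using Rn_dependent[OF assms] by blast
  have "\<exists>c. 0 < c v0 \<and> (\<forall>i. (\<Sum>v\<in>S. c v * v i) = 0)"
  proof (cases "0 < u v0")
    case False
    then show ?thesis
      using \<open>u v0 \<noteq> 0\<close> dep by (intro exI[of _ "\<lambda>v. - u v"]) (simp add: sum_negf)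
  qed (use dep in blast)
  then obtain c where "0 < c v0" and dep: "\<And>i. (\<Sum>v\<in>S. c v * v i) = 0"
    by blast
  define P where "P = {v\<in>S. 0 < c v}"
  define Q where "Q = {v\<in>S. c v < 0}"
  have "finite P" "finite Q" "P \<inter> Q = {}"
    using \<open>finite S\<close> by (auto simp: P_def Q_def)
  have "(\<Sum>p\<in>P. \<bar>c p\<bar> * p i) = (\<Sum>q\<in>Q. \<bar>c q\<bar> * q i)" for i
  proof -
    have "(\<Sum>v\<in>P \<union> Q. c v * v i) = (\<Sum>v\<in>S. c v * v i)"
      by (rule sum.mono_neutral_left) (auto simp: \<open>finite S\<close> P_def Q_def)
    then have "(\<Sum>p\<in>P. c p * p i) + (\<Sum>q\<in>Q. c q * q i) = 0"
      using dep[of i] sum.union_disjoint[OF \<open>finite P\<close> \<open>finite Q\<close> \<open>P \<inter> Q = {}\<close>, of "\<lambda>v. c v * v i"]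
      by simp
    moreover have "(\<Sum>p\<in>P. \<bar>c p\<bar> * p i) = (\<Sum>p\<in>P. c p * p i)"
      by (rule sum.cong) (auto simp: P_def)
    moreover have "(\<Sum>q\<in>Q. \<bar>c q\<bar> * q i) = - (\<Sum>q\<in>Q. c q * q i)"
      by (simp add: sum_negf[symmetric] Q_def)
    ultimately show ?thesis
      by linarith
  qed
  moreover have "P \<subseteq> S" "Q \<subseteq> S" "v0 \<in> P" "\<And>v. v \<in> P \<union> Q \<Longrightarrow> 0 < \<bar>c v\<bar>"
    using \<open>v0 \<in> S\<close> \<open>0 < c v0\<close> by (auto simp: P_def Q_def)
  ultimately show ?thesis
    using that[of P Q "\<lambda>v. \<bar>c v\<bar>"] \<open>P \<inter> Q = {}\<close> by blast
qed

lemma obtuse_balance_vanishes: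
  assumes obtuse: "\<And>p q. p \<in> P \<Longrightarrow> q \<in> Q \<Longrightarrow> inner_Rn n p q \<le> 0"
    and nonneg: "\<And>v. v \<in> P \<union> Q \<Longrightarrow> 0 \<le> a v"
    and balance: "\<And>i. (\<Sum>p\<in>P. a p * p i) = (\<Sum>q\<in>Q. a q * q i)"
  shows "\<forall>i<n. (\<Sum>p\<in>P. a p * p i) = 0"
proof -
  define W where "W = (\<lambda>i. \<Sum>p\<in>P. a p * p i)"
  have "inner_Rn n W W = inner_Rn n (\<lambda>i. \<Sum>p\<in>P. a p * p i) (\<lambda>i. \<Sum>q\<in>Q. a q * q i)"
    by (simp add: W_def balance[symmetric])
  also have "\<dots> = (\<Sum>p\<in>P. a p * (\<Sum>q\<in>Q. a q * inner_Rn n p q))"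
    by (simp only: inner_Rn_sum_left inner_Rn_sum_right)
  also have "\<dots> \<le> 0"
  proof (rule sum_nonpos)
    fix p
    assume "p \<in> P"
    then have "a q * inner_Rn n p q \<le> 0" if "q \<in> Q" for q
      using obtuse[of p q] nonneg[of q] that by (simp add: mult_nonneg_nonpos)
    then show "a p * (\<Sum>q\<in>Q. a q * inner_Rn n p q) \<le> 0"
      using nonneg[of p] \<open>p \<in> P\<close> by (simp add: mult_nonneg_nonpos sum_nonpos)
  qed
  finally have "inner_Rn n W W = 0"
    using inner_Rn_self_nonneg[of n W] by linarith
  then show ?thesis
    by (simp add: inner_Rn_self_eq_0_iff W_def)
qed

lemma card_pairwise_obtuse_le:
  assumes "finite S" "S \<subseteq> Rn n"
    and obtuse: "\<And>p q. p \<in> S \<Longrightarrow> q \<in> S \<Longrightarrow> p \<noteq> q \<Longrightarrow> inner_Rn n p q < 0"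
  shows "card S \<le> Suc n"
proof (rule ccontr)
  assume "\<not> card S \<le> Suc n"
  then obtain z where "z \<in> S"
    by fastforce
  have S': "finite (S - {z})" "S - {z} \<subseteq> Rn n" "n < card (S - {z})"
    using assms \<open>\<not> card S \<le> Suc n\<close> \<open>z \<in> S\<close> by auto
  obtain P Q a where PQ: "P \<subseteq> S - {z}" "Q \<subseteq> S - {z}" "P \<inter> Q = {}" "P \<noteq> {}"
    and pos: "\<And>v. v \<in> P \<union> Q \<Longrightarrow> 0 < a v"
    and balance: "\<And>i. (\<Sum>p\<in>P. a p * p i) = (\<Sum>q\<in>Q. a q * q i)"
    using Rn_dependent_split[OF S'] by blast
  have "\<forall>i<n. (\<Sum>p\<in>P. a p * p i) = 0"
  proof (rule obtuse_balance_vanishes[OF _ _ balance])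
    show "inner_Rn n p q \<le> 0" if "p \<in> P" "q \<in> Q" for p q
      using obtuse[of p q] PQ that by fastforce
  qed (use pos in \<open>auto intro: less_imp_le\<close>)
  then have "inner_Rn n (\<lambda>i. \<Sum>p\<in>P. a p * p i) z = 0"
    by (simp add: inner_Rn_def)
  moreover have "(\<Sum>p\<in>P. a p * inner_Rn n p z) < (\<Sum>p\<in>P. 0)"
  proof (rule sum_strict_mono)
    show "finite P"
      using PQ \<open>finite S\<close> finite_subset by blast
    show "a p * inner_Rn n p z < 0" if "p \<in> P" for p
      using obtuse[of p z] PQ \<open>z \<in> S\<close> pos[of p] that by (auto intro: mult_pos_neg)
  qed (use PQ in auto)
  ultimately show False
    by (simp add: inner_Rn_sum_left)
qed

lemma no_obtuse_packing_Rn: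
  assumes "sqrt 2 * r \<le> s" "x \<in> Rn n"
  shows "\<not> packing n (n + 2) x r s Y"
proof
  assume packing: "packing n (n + 2) x r s Y"
  define v where "v i = Y i - x" for i
  have "0 \<le> r"
    using packing eucl_dist_nonneg[of n x "Y 0"] by (auto simp: packing_def)
  have norm_v: "inner_Rn n (v i) (v i) < r\<^sup>2" if "i < n + 2" for i
  proof -
    have "eucl_dist n 0 (v i) < r"
      using packing that eucl_dist_diff_right[of n x x "Y i"] by (simp add: packing_def v_def)
    then show ?thesis
      using eucl_dist_zero_left[of n "v i"] eucl_dist_nonneg[of n 0 "v i"]
      by (metis power_strict_mono zero_less_numeral)
  qed
  have obtuse: "inner_Rn n (v i) (v j) < 0" if "i < n + 2" "j < n + 2" "i \<noteq> j" for i j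
  proof -
    have "s \<le> eucl_dist n (v i) (v j)"
      using packing that by (simp add: packing_def v_def eucl_dist_diff_right)
    then have "sqrt 2 * r \<le> eucl_dist n (v i) (v j)"
      using assms(1) by linarith
    then have "(sqrt 2 * r)\<^sup>2 \<le> (eucl_dist n (v i) (v j))\<^sup>2"
      using \<open>0 \<le> r\<close> by (intro power_mono) auto
    then have "2 * r\<^sup>2 \<le> (eucl_dist n (v i) (v j))\<^sup>2"
      by (simp add: power_mult_distrib)
    then show ?thesis
      using norm_v[OF that(1)] norm_v[OF that(2)] eucl_dist_sq_eq_inner_Rn[of n "v i" "v j"]
      by linarith
  qed
  have "inj_on v {..<n + 2}"
  proof (rule inj_onI)
    fix i j
    assume "i \<in> {..<n + 2}" "j \<in> {..<n + 2}" "v i = v j"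
    then show "i = j"
      using obtuse[of i j] inner_Rn_self_nonneg[of n "v i"] by force
  qed
  then have "card (v ` {..<n + 2}) = n + 2"
    by (simp add: card_image)
  moreover have "card (v ` {..<n + 2}) \<le> Suc n"
  proof (rule card_pairwise_obtuse_le)
    show "v ` {..<n + 2} \<subseteq> Rn n"
      using packing \<open>x \<in> Rn n\<close> by (auto simp: packing_def v_def Rn_def)
  qed (use obtuse in auto)
  ultimately show False
    by simp
qed

section \<open>A packing in one dimension more\<close>

lemma exists_nat_ratio_between:
  fixes a b :: real
  assumes "0 \<le> a" "a < b"
  shows "\<exists>(k :: nat) (m :: nat). (1::nat) \<le> k \<and> a * k \<le> m \<and> m < b * k"
proof -
  obtain k0 :: nat where "1 / (b - a) < k0"
    using reals_Archimedean2 by blast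
  define k where "k = Suc k0"
  define m where "m = nat \<lceil>a * k\<rceil>"
  have "1 < (b - a) * k"
    using \<open>1 / (b - a) < k0\<close> \<open>a < b\<close> by (simp add: k_def field_simps)
  have "real m = of_int \<lceil>a * k\<rceil>"
    using \<open>0 \<le> a\<close> by (simp add: m_def)
  then have "a * k \<le> m" "m < a * k + 1"
    using ceiling_correct[of "a * k"] by linarith+
  then show ?thesis
    using \<open>1 < (b - a) * k\<close> by (intro exI[of _ k] exI[of _ m]) (auto simp: k_def algebra_simps)
qed

lemma sum_lessThan_if_eq:
  assumes "i < N"
  shows "(\<Sum>t<N. if t = i then A else B) = A + (real N - 1) * (B :: real)"
proof -
  have "(\<Sum>t<N. if t = i then A else B) = (\<Sum>t<N. B + (if t = i then A - B else 0))"
    by (rule sum.cong) auto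
  also have "\<dots> = real N * B + (A - B)"
    using assms by (simp add: sum.distrib)
  finally show ?thesis
    by (simp add: algebra_simps)
qed

definition simplex_vertex :: "nat \<Rightarrow> real \<Rightarrow> real \<Rightarrow> nat \<Rightarrow> nat \<Rightarrow> real" where
  "simplex_vertex N a c i t = (if t < N then (if i < N then (if t = i then 1 else 0) - a else - c) else 0)"

lemma simplex_vertex_in_Rn: "simplex_vertex N a c i \<in> Rn N"
  by (simp add: simplex_vertex_def Rn_def)

lemma simplex_vertex_norm_sq:
  "(eucl_dist N 0 (simplex_vertex N a c i))\<^sup>2 =
    (if i < N then (1 - a)\<^sup>2 + (real N - 1) * a\<^sup>2 else N * c\<^sup>2)"
proof (cases "i < N")
  case True
  have "(\<Sum>t<N. (0 - simplex_vertex N a c i t)\<^sup>2) = (\<Sum>t<N. if t = i then (1 - a)\<^sup>2 else a\<^sup>2)"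
    by (rule sum.cong) (auto simp: simplex_vertex_def True power2_commute)
  then show ?thesis
    using sum_lessThan_if_eq[OF True] True by (simp add: eucl_dist_sq)
next
  case False
  then have "(\<Sum>t<N. (0 - simplex_vertex N a c i t)\<^sup>2) = (\<Sum>t<N. c\<^sup>2)"
    by (intro sum.cong) (auto simp: simplex_vertex_def)
  then show ?thesis
    using False by (simp add: eucl_dist_sq)
qed

lemma simplex_vertex_dist_sq_base:
  assumes "i < N" "j < N" "i \<noteq> j"
  shows "(eucl_dist N (simplex_vertex N a c i) (simplex_vertex N a c j))\<^sup>2 = 2"
proof -
  have "(\<Sum>t<N. (simplex_vertex N a c i t - simplex_vertex N a c j t)\<^sup>2)
      = (\<Sum>t<N. (if t = i then 1 else 0) + (if t = j then 1 else 0 :: real))"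
    by (rule sum.cong) (use assms in \<open>auto simp: simplex_vertex_def\<close>)
  then show ?thesis
    using assms by (simp add: eucl_dist_sq sum.distrib)
qed

lemma simplex_vertex_dist_sq_apex:
  assumes "i < N"
  shows "(eucl_dist N (simplex_vertex N a c i) (simplex_vertex N a c N))\<^sup>2
    = (1 - a)\<^sup>2 + (real N - 1) * a\<^sup>2 + N * c\<^sup>2 + 2 * c * (1 - N * a)"
proof -
  have "(eucl_dist N (simplex_vertex N a c i) (simplex_vertex N a c N))\<^sup>2
      = (\<Sum>t<N. (simplex_vertex N a c i t - simplex_vertex N a c N t)\<^sup>2)"
    by (rule eucl_dist_sq)
  also have "\<dots> = (\<Sum>t<N. if t = i then (1 - a + c)\<^sup>2 else (c - a)\<^sup>2)"
    by (rule sum.cong) (use assms in \<open>auto simp: simplex_vertex_def power2_commute\<close>)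
  also have "\<dots> = (1 - a + c)\<^sup>2 + (real N - 1) * (c - a)\<^sup>2"
    by (rule sum_lessThan_if_eq[OF assms])
  finally show ?thesis
    by (simp add: power2_eq_square algebra_simps)
qed

lemma Rn_obtuse_simplex:
  assumes "1 \<le> N"
  obtains r \<rho> v where "0 < r" "sqrt 2 * r < \<rho>"
    "\<And>i. i \<le> N \<Longrightarrow> v i \<in> Rn N \<and> eucl_dist N 0 (v i) \<le> r"
    "\<And>i j. i \<le> N \<Longrightarrow> j \<le> N \<Longrightarrow> i \<noteq> j \<Longrightarrow> \<rho> \<le> eucl_dist N (v i) (v j)"
proof -
  \<comment> \<open>All vertices have squared norm \<open>r2\<close>; base vertices are at squared distance
    \<open>2 = 2 r2 + 3 / (2 N)\<close>, and each of them at \<open>2 r2 + c\<close> from the apex.\<close>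
  define a :: real where "a = 1 / (2 * N)"
  define r2 :: real where "r2 = 1 - 3 / (4 * N)"
  define c where "c = sqrt (r2 / N)"
  define v where "v = simplex_vertex N a c"
  have "1 \<le> real N"
    using assms by simp
  then have "0 < r2" "0 < c" "N * c\<^sup>2 = r2" "N * a = 1 / 2" "(1 - a)\<^sup>2 + (real N - 1) * a\<^sup>2 = r2"
    by (auto simp: r2_def c_def a_def field_simps power2_eq_square)
  then have norm: "(eucl_dist N 0 (v i))\<^sup>2 = r2" for i
    by (simp add: v_def simplex_vertex_norm_sq)
  have apex: "(eucl_dist N (v i) (v N))\<^sup>2 = 2 * r2 + c" if "i < N" for i
    using simplex_vertex_dist_sq_apex[OF that, of a c] \<open>N * c\<^sup>2 = r2\<close> \<open>N * a = 1 / 2\<close>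
      \<open>(1 - a)\<^sup>2 + (real N - 1) * a\<^sup>2 = r2\<close>
    by (simp add: v_def)
  define \<delta> where "\<delta> = min c (3 / (2 * N))"
  have "2 * r2 + 3 / (2 * N) = 2"
    using \<open>1 \<le> real N\<close> by (simp add: r2_def field_simps)
  then have far: "2 * r2 + \<delta> \<le> (eucl_dist N (v i) (v j))\<^sup>2"
    if ij: "i \<le> N" "j \<le> N" "i \<noteq> j" for i j
  proof -
    have "\<delta> \<le> 3 / (2 * N)" "\<delta> \<le> c"
      by (simp_all add: \<delta>_def)
    consider "i < N" "j < N" | "i < N" "j = N" | "i = N" "j < N"
      using ij by fastforce
    then show ?thesis
    proof cases
      case 1
      then show ?thesis
        using simplex_vertex_dist_sq_base[OF 1 ij(3), of a c] \<open>2 * r2 + 3 / (2 * N) = 2\<close> \<open>\<delta> \<le> 3 / (2 * N)\<close>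
        unfolding v_def by linarith
    next
      case 2
      then show ?thesis
        using apex[of i] \<open>\<delta> \<le> c\<close> by simp
    next
      case 3
      then show ?thesis
        using apex[of j] \<open>\<delta> \<le> c\<close> eucl_dist_commute[of N "v i" "v j"] by simp
    qed
  qed
  show ?thesis
  proof (rule that[of "sqrt r2" "sqrt (2 * r2 + \<delta>)" v])
    show "0 < sqrt r2"
      using \<open>0 < r2\<close> by simp
    show "sqrt 2 * sqrt r2 < sqrt (2 * r2 + \<delta>)"
      using \<open>0 < c\<close> \<open>1 \<le> real N\<close> by (simp add: real_sqrt_mult[symmetric] \<delta>_def)
    show "v i \<in> Rn N \<and> eucl_dist N 0 (v i) \<le> sqrt r2" for i
      using norm[of i] eucl_dist_nonneg[of N 0 "v i"] real_sqrt_unique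
      by (auto simp: v_def simplex_vertex_in_Rn)
    show "sqrt (2 * r2 + \<delta>) \<le> eucl_dist N (v i) (v j)" if "i \<le> N" "j \<le> N" "i \<noteq> j" for i j
      using far[OF that] eucl_dist_nonneg by (intro real_le_lsqrt) auto
  qed
qed

lemma packing_scaled:
  assumes "0 \<le> c" "c * r < R" "S \<le> c * \<rho>"
    and points: "\<And>i. i < M \<Longrightarrow> v i \<in> Rn N \<and> eucl_dist N 0 (v i) \<le> r"
    and far: "\<And>i j. i < M \<Longrightarrow> j < M \<Longrightarrow> i \<noteq> j \<Longrightarrow> \<rho> \<le> eucl_dist N (v i) (v j)"
  shows "packing N M 0 R S (\<lambda>i t. c * v i t)"
  unfolding packing_def
proof (intro conjI allI impI)
  fix i
  assume "i < M"
  have "eucl_dist N 0 (\<lambda>t. c * v i t) = c * eucl_dist N 0 (v i)"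
    using eucl_dist_mult[of 0 "\<lambda>t. c * v i t" c 0 "v i"] \<open>0 \<le> c\<close> by simp
  also have "\<dots> \<le> c * r"
    using points[OF \<open>i < M\<close>] \<open>0 \<le> c\<close> by (simp add: mult_left_mono)
  finally show "eucl_dist N 0 (\<lambda>t. c * v i t) < R"
    using \<open>c * r < R\<close> by linarith
  show "(\<lambda>t. c * v i t) \<in> Rn N"
    using points[OF \<open>i < M\<close>] by (simp add: Rn_def)
next
  fix i j
  assume "i < M" "j < M" "i \<noteq> j"
  have "S \<le> c * eucl_dist N (v i) (v j)"
    using far[OF \<open>i < M\<close> \<open>j < M\<close> \<open>i \<noteq> j\<close>] \<open>0 \<le> c\<close> \<open>S \<le> c * \<rho>\<close>
    by (meson mult_left_mono order_trans)
  also have "\<dots> = eucl_dist N (\<lambda>t. c * v i t) (\<lambda>t. c * v j t)"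
    using eucl_dist_mult[of "\<lambda>t. c * v i t" "\<lambda>t. c * v j t" c "v i" "v j"] \<open>0 \<le> c\<close>
    by (simp add: algebra_simps)
  finally show "S \<le> eucl_dist N (\<lambda>t. c * v i t) (\<lambda>t. c * v j t)" .
qed

lemma packing_Rn_exists:
  assumes "1 \<le> N"
  obtains k m :: nat and Y where "1 \<le> k" "sqrt 2 * k \<le> m" "packing N (Suc N) 0 k m Y"
proof -
  obtain r \<rho> v where "0 < r" "sqrt 2 * r < \<rho>"
    and points: "\<And>i. i \<le> N \<Longrightarrow> v i \<in> Rn N \<and> eucl_dist N 0 (v i) \<le> r"
    and far: "\<And>i j. i \<le> N \<Longrightarrow> j \<le> N \<Longrightarrow> i \<noteq> j \<Longrightarrow> \<rho> \<le> eucl_dist N (v i) (v j)"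
    using Rn_obtuse_simplex[OF assms] by metis
  have "0 < \<rho>"
    using \<open>0 < r\<close> \<open>sqrt 2 * r < \<rho>\<close> by (smt (verit) real_sqrt_ge_zero mult_nonneg_nonneg)
  have "sqrt 2 < \<rho> / r"
    using \<open>0 < r\<close> \<open>sqrt 2 * r < \<rho>\<close> by (simp add: pos_less_divide_eq)
  then obtain k m :: nat where "1 \<le> k" "sqrt 2 * k \<le> m" "m < \<rho> / r * k"
    using exists_nat_ratio_between[of "sqrt 2" "\<rho> / r"] by auto
  have "m / \<rho> * r < k"
    using \<open>m < \<rho> / r * k\<close> \<open>0 < r\<close> \<open>0 < \<rho>\<close> by (simp add: field_simps)
  moreover have "m \<le> m / \<rho> * \<rho>"
    using \<open>0 < \<rho>\<close> by simp
  ultimately have "packing N (Suc N) 0 k m (\<lambda>i t. m / \<rho> * v i t)"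
    using \<open>0 < \<rho>\<close> points far by (intro packing_scaled[where r = r and \<rho> = \<rho>]) auto
  with \<open>1 \<le> k\<close> \<open>sqrt 2 * k \<le> m\<close> show ?thesis
    by (rule that)
qed

theorem proposition3p7:
  fixes n :: nat
  assumes "n \<ge> 1"
  shows "Log_lt1 (Rn (Suc n)) (eucl_dist (Suc n)) \<subset> Log_lt1 (Rn n) (eucl_dist n)"
proof -
  obtain k m :: nat and Y where "1 \<le> k" "sqrt 2 * k \<le> m" and packing: "packing (Suc n) (n + 2) 0 k m Y"
    using packing_Rn_exists[of "Suc n"] by auto
  have "1 \<le> sqrt 2 * real k"
    using mult_mono[of 1 "sqrt 2" 1 "real k"] \<open>1 \<le> k\<close> by simp
  then have "1 \<le> m"
    using \<open>sqrt 2 * k \<le> m\<close> by simp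
  have "0 \<in> Rn (Suc n)"
    by (simp add: Rn_def)
  then have "no_packing_fm (n + 2) k m \<notin> Log_lt1 (Rn (Suc n)) (eucl_dist (Suc n))"
    using packing_refutes_no_packing_fm[OF \<open>1 \<le> k\<close> \<open>1 \<le> m\<close> _ packing] by (simp add: Log_lt1_def)
  moreover have "no_packing_fm (n + 2) k m \<in> Log_lt1 (Rn n) (eucl_dist n)"
    using valid_no_packing_fm[OF \<open>1 \<le> k\<close> \<open>1 \<le> m\<close> no_obtuse_packing_Rn[OF \<open>sqrt 2 * k \<le> m\<close>]]
    by (simp add: Log_lt1_def)
  ultimately show ?thesis
    using Log_lt1_Rn_Suc_subset by blast
qed

end
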